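(* Let $m_1,m_2,c_1,c_2,k_1,k_2>0$ and put $m=m_1+m_2$, $c=c_1+c_2$, $k=k_1+k_2$. Consider the switched system on $\mathbb{R}^4$ with state $x=(x_1,x_2,x_3,x_4)$, given by $E_{\sigma(t)}\dot x=A_{\sigma(t)}x$ with $\sigma(t)\in\{1,2\}$ and $$E_1=\mathrm{diag}(1,m_1,1,m_2),\quad A_1=\begin{bmatrix}0&1&0&0\\-k_1&-c_1&0&0\\0&0&0&1\\0&0&-k_2&-c_2\end{bmatrix},\quad E_2=\mathrm{diag}(1,m,1,0),\quad A_2=\begin{bmatrix}0&1&0&0\\-k&-c&0&0\\0&0&0&1\\-1&0&1&0\end{bmatrix},$$ with the following switching rules: a switch from mode 2 to mode 1 may occur at any time and then $x(t_*^+)=x(t_*^-)$; a switch from mode 1 to mode 2 at time $t_*$ may occur only if $x_1(t_*^-)=x_3(t_*^-)$, and then $x_1(t_*^+)=x_3(t_*^+)=x_1(t_*^-)$ and $x_2(t_*^+)=x_4(t_*^+)=\frac{m_1x_2(t_*^-)+m_2x_4(t_*^-)}{m}$. Then this switched system is globally uniformly exponentially stable about zero.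
   Context: This models two spring–mass–damper systems (masses $m_1,m_2$, damping $c_1,c_2$, stiffness $k_1,k_2$, displacements $x_1=q_1$, $x_3=q_2$, velocities $x_2,x_4$) that may lock together (mode 2) with conservation of momentum at lock-up, or move independently (mode 1). Switched descriptor system: the switching signal $\sigma$ is piecewise constant with finitely many discontinuities in every bounded interval; a solution $x(\cdot)$ is differentiable and satisfies $E_{\sigma(t)}\dot x(t)=A_{\sigma(t)}x(t)$ at every $t$ where $\sigma$ is continuous, with one-sided limits $x(t_*^\pm)$ at discontinuities of $\sigma$, where the stated switching rules hold (the differential equation is not required at switching instants). GUES means there exist $\beta,\alpha>0$ such that every solution satisfies $\|x(t)\|\le\beta e^{-\alpha(t-t_0)}\|x(t_0)\|$ for all $t\ge t_0$. *)

theory Defs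
  imports "HOL-Analysis.Analysis"
begin

definition EE :: "real \<Rightarrow> real \<Rightarrow> nat \<Rightarrow> real^4^4" where
  "EE m1 m2 i =
     (if i = 1 then vector [vector [1,0,0,0], vector [0,m1,0,0], vector [0,0,1,0], vector [0,0,0,m2]]
      else vector [vector [1,0,0,0], vector [0,m1+m2,0,0], vector [0,0,1,0], vector [0,0,0,0]])"

definition AA :: "real \<Rightarrow> real \<Rightarrow> real \<Rightarrow> real \<Rightarrow> nat \<Rightarrow> real^4^4" where
  "AA c1 c2 k1 k2 i =
     (if i = 1 then vector [vector [0,1,0,0], vector [-k1,-c1,0,0], vector [0,0,0,1], vector [0,0,-k2,-c2]]
      else vector [vector [0,1,0,0], vector [-(k1+k2),-(c1+c2),0,0], vector [0,0,0,1], vector [-1,0,1,0]])"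

text \<open>Switching rule for a switch from mode i (just before) to mode j (just after),
  with xm = x(t*^-) and xp = x(t*^+).\<close>

definition switch_rule :: "real \<Rightarrow> real \<Rightarrow> nat \<Rightarrow> nat \<Rightarrow> real^4 \<Rightarrow> real^4 \<Rightarrow> bool" where
  "switch_rule m1 m2 i j xm xp \<longleftrightarrow>
     (i = 2 \<and> j = 1 \<longrightarrow> xp = xm) \<and>
     (i = 1 \<and> j = 2 \<longrightarrow>
        xm$1 = xm$3 \<and> xp$1 = xm$1 \<and> xp$3 = xm$1 \<and>
        xp$2 = (m1 * xm$2 + m2 * xm$4) / (m1 + m2) \<and>
        xp$4 = (m1 * xm$2 + m2 * xm$4) / (m1 + m2))"

text \<open>Solutions on [t0, \<infinity>).  The switching signal is normalised to be right-continuous,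
  and the state at a switching instant is its right limit x(t*^+).\<close>

definition is_solution ::
  "real \<Rightarrow> real \<Rightarrow> real \<Rightarrow> real \<Rightarrow> real \<Rightarrow> real \<Rightarrow> real \<Rightarrow> (real \<Rightarrow> nat) \<Rightarrow> (real \<Rightarrow> real^4) \<Rightarrow> bool" where
  "is_solution m1 m2 c1 c2 k1 k2 t0 \<sigma> x \<longleftrightarrow>
     (\<forall>t\<ge>t0. \<sigma> t \<in> {1, 2}) \<and>
     (\<forall>t\<ge>t0. eventually (\<lambda>s. \<sigma> s = \<sigma> t) (at_right t)) \<and>
     (\<forall>T. finite {t. t0 < t \<and> t \<le> T \<and> \<not> isCont \<sigma> t}) \<and>
     (\<forall>t\<ge>t0. (t = t0 \<or> isCont \<sigma> t) \<longrightarrow>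
        (\<exists>x'. (x has_vector_derivative x') (at t within {t0..}) \<and>
              EE m1 m2 (\<sigma> t) *v x' = AA c1 c2 k1 k2 (\<sigma> t) *v x t)) \<and>
     (\<forall>t>t0. \<not> isCont \<sigma> t \<longrightarrow>
        (\<exists>xm. (x \<longlongrightarrow> xm) (at_left t) \<and> (x \<longlongrightarrow> x t) (at_right t) \<and>
              (\<forall>i. eventually (\<lambda>s. \<sigma> s = i) (at_left t) \<longrightarrow>
                   switch_rule m1 m2 i (\<sigma> t) xm (x t))))"

definition GUES :: "real \<Rightarrow> real \<Rightarrow> real \<Rightarrow> real \<Rightarrow> real \<Rightarrow> real \<Rightarrow> bool" where
  "GUES m1 m2 c1 c2 k1 k2 \<longleftrightarrow>
     (\<exists>\<beta>>0. \<exists>\<alpha>>0. \<forall>t0 \<sigma> x. is_solution m1 m2 c1 c2 k1 k2 t0 \<sigma> x \<longrightarrow>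
        (\<forall>t\<ge>t0. norm (x t) \<le> \<beta> * exp (- \<alpha> * (t - t0)) * norm (x t0)))"

end

theory Submission
  imports Defs
begin

text \<open>A Lyapunov function is the sum over the two oscillators of
  \<open>k p\<^sup>2/2 + m z\<^sup>2/2 + e m p z\<close> (position \<open>p\<close>, velocity \<open>z\<close>). For small \<open>e > 0\<close> it is
  equivalent to the squared norm and decays at rate \<open>2e/3\<close> along mode 1. In mode 2 the algebraic
  constraint forces \<open>x\<^sub>3 = x\<^sub>1\<close> and \<open>x\<^sub>4 = x\<^sub>2\<close>, where the function coincides with that of
  the combined oscillator \<open>(m, c, k)\<close>, so it decays at the same rate. A lock-up switch keeps the
  positions and replaces both velocities by the momentum average, which preserves the cross terms
  \<open>e m\<^sub>i p z\<^sub>i\<close> and, by convexity, does not increase the kinetic energy; unlocking keeps the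
  state. Hence \<open>exp (2e (t - t\<^sub>0)/3) V (x t)\<close> is nonincreasing, which gives the exponential
  bound.\<close>

section \<open>Piecewise differentiable functions with downward jumps\<close>

lemma exp_weighted_DERIV_nonpos:
  fixes f :: "real \<Rightarrow> real"
  assumes "(f has_real_derivative L) (at t within S)" "r * f t + L \<le> 0"
  shows "\<exists>d. ((\<lambda>s. exp (r * (s - t0)) * f s) has_real_derivative d) (at t within S) \<and> d \<le> 0"
proof -
  have "((\<lambda>s. exp (r * (s - t0)) * f s) has_real_derivative exp (r * (t - t0)) * (r * f t + L))
          (at t within S)"
    by (rule derivative_eq_intros assms(1) refl | simp)+ (simp add: algebra_simps)
  moreover have "exp (r * (t - t0)) * (r * f t + L) \<le> 0"
    using assms(2) by (simp add: mult_nonneg_nonpos)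
  ultimately show ?thesis by blast
qed

lemma nonincreasing_between_jumps:
  fixes g :: "real \<Rightarrow> real"
  assumes "a \<le> s" "s \<le> T"
    and no_jump: "\<And>u. s < u \<Longrightarrow> u \<le> T \<Longrightarrow> \<not> P u"
    and deriv: "\<And>t. t \<ge> a \<Longrightarrow> (t = a \<or> \<not> P t) \<Longrightarrow>
                  \<exists>d. (g has_real_derivative d) (at t within {a..}) \<and> d \<le> 0"
    and right_cont: "s = a \<or> (g \<longlongrightarrow> g s) (at_right s)"
  shows "g T \<le> g s"
proof (rule DERIV_nonpos_imp_decreasing_open[OF \<open>s \<le> T\<close>])
  fix u assume u: "s < u" "u < T"
  then obtain d where d: "(g has_real_derivative d) (at u within {a..})" "d \<le> 0"
    using deriv[of u] no_jump[of u] assms(1) by force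
  have "at u within {a..} = at u" using u assms(1) by (intro at_within_interior) auto
  with d show "\<exists>y. (g has_real_derivative y) (at u) \<and> y \<le> 0" by auto
next
  show "continuous_on {s..T} g"
    unfolding continuous_on_eq_continuous_within
  proof
    fix u assume u: "u \<in> {s..T}"
    show "continuous (at u within {s..T}) g"
    proof (cases "u = s \<and> s \<noteq> a")
      case True
      with right_cont have r: "(g \<longlongrightarrow> g s) (at_right s)" by auto
      show ?thesis
      proof (cases "s = T")
        case True
        then show ?thesis using u by (simp add: continuous_within at_within_def)
      next
        case False
        then have "at s within {s..T} = at_right s" using assms by (intro at_within_Icc_at_right) auto
        with r \<open>u = s \<and> s \<noteq> a\<close> show ?thesis by (simp add: continuous_within)
      qed
    next
      case False
      then have "u = a \<or> \<not> P u" using u no_jump[of u] by (cases "u = s") auto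
      then obtain d where "(g has_real_derivative d) (at u within {a..})"
        using deriv[of u] u assms(1) by force
      then have "continuous (at u within {a..}) g" by (rule DERIV_continuous)
      then show ?thesis by (rule continuous_within_subset) (use assms(1) in auto)
    qed
  qed
qed

text \<open>Induction on the number of jumps in \<open>(a, t]\<close>; the last jump \<open>s\<close> is approached from the
  left by points with fewer jumps, so the left limit there is at most \<open>g a\<close>.\<close>

lemma nonincreasing_with_downward_jumps:
  fixes g :: "real \<Rightarrow> real"
  assumes finite_jumps: "\<And>T. finite {t. a < t \<and> t \<le> T \<and> P t}"
    and deriv: "\<And>t. t \<ge> a \<Longrightarrow> (t = a \<or> \<not> P t) \<Longrightarrow>
                  \<exists>d. (g has_real_derivative d) (at t within {a..}) \<and> d \<le> 0"
    and jump: "\<And>t. t > a \<Longrightarrow> P t \<Longrightarrow>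
                 (g \<longlongrightarrow> g t) (at_right t) \<and> (\<exists>L. (g \<longlongrightarrow> L) (at_left t) \<and> g t \<le> L)"
    and "a \<le> t"
  shows "g t \<le> g a"
  using \<open>a \<le> t\<close>
proof (induction "card {u. a < u \<and> u \<le> t \<and> P u}" arbitrary: t rule: less_induct)
  case less
  define D where "D = {u. a < u \<and> u \<le> t \<and> P u}"
  have fin_D: "finite D" unfolding D_def by (rule finite_jumps)
  show ?case
  proof (cases "D = {}")
    case True
    show ?thesis
    proof (rule nonincreasing_between_jumps[where P = P, OF order_refl less.prems _ deriv])
      show "\<not> P u" if "a < u" "u \<le> t" for u
        using True that unfolding D_def by blast
    qed simp_all
  next
    case False
    define s where "s = Max D"
    have s_in: "s \<in> D" using False fin_D s_def by (simp add: Max_in)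
    have s_max: "\<And>u. u \<in> D \<Longrightarrow> u \<le> s" using fin_D s_def by (simp add: Max_ge)
    have s: "a < s" "s \<le> t" "P s" using s_in by (auto simp: D_def)
    obtain L where L: "(g \<longlongrightarrow> g s) (at_right s)" "(g \<longlongrightarrow> L) (at_left s)" "g s \<le> L"
      using jump[OF s(1) s(3)] by blast
    have "g t \<le> g s"
    proof (rule nonincreasing_between_jumps[where P = P, OF _ s(2) _ deriv])
      show "\<not> P u" if "s < u" "u \<le> t" for u
      proof
        assume "P u"
        then have "u \<in> D" using that s unfolding D_def by auto
        then show False using s_max[of u] that by linarith
      qed
    qed (use s L in simp_all)
    moreover have "L \<le> g a"
    proof (rule tendsto_upperbound[OF L(2)])
      show "\<forall>\<^sub>F u in at_left s. g u \<le> g a"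
        using eventually_at_left_real[OF s(1)]
      proof eventually_elim
        case (elim u)
        have "{v. a < v \<and> v \<le> u \<and> P v} \<subseteq> D" "s \<notin> {v. a < v \<and> v \<le> u \<and> P v}"
          using elim s(2) unfolding D_def by auto
        with s_in have "{v. a < v \<and> v \<le> u \<and> P v} \<subset> D" by blast
        then have "card {v. a < v \<and> v \<le> u \<and> P v} < card D"
          by (rule psubset_card_mono[OF fin_D])
        then show ?case using less.hyps[of u] elim unfolding D_def by simp
      qed
    qed simp
    ultimately show ?thesis using L(3) by linarith
  qed
qed

section \<open>Energy of a damped oscillator\<close>

definition osc_energy :: "real \<Rightarrow> real \<Rightarrow> real \<Rightarrow> real \<Rightarrow> real \<Rightarrow> real" where
  "osc_energy m k e p z = k * p\<^sup>2 / 2 + m * z\<^sup>2 / 2 + e * m * p * z"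

definition osc_energy_deriv :: "real \<Rightarrow> real \<Rightarrow> real \<Rightarrow> real \<Rightarrow> real \<Rightarrow> real \<Rightarrow> real \<Rightarrow> real" where
  "osc_energy_deriv m k e p z p' z' = k * p * p' + m * z * z' + e * m * (p' * z + p * z')"

definition admissible_weight :: "real \<Rightarrow> real \<Rightarrow> real \<Rightarrow> real \<Rightarrow> bool" where
  "admissible_weight m c k e \<longleftrightarrow>
     0 < e \<and> e \<le> 1 \<and> 4 * m * e \<le> k \<and> 4 * m * e \<le> c \<and> 2 * c * e \<le> k"

lemma eventually_admissible_weight:
  assumes "0 < m" "0 < c" "0 < k"
  shows "eventually (admissible_weight m c k) (at_right 0)"
proof -
  define b where "b = min 1 (min (k / (4 * m)) (min (c / (4 * m)) (k / (2 * c))))"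
  have "0 < b" using assms by (simp add: b_def)
  moreover have "admissible_weight m c k e" if "0 < e" "e < b" for e
  proof -
    have "e * (4 * m) < k" "e * (4 * m) < c" "e * (2 * c) < k"
      using that assms by (simp_all add: b_def pos_less_divide_eq)
    then show ?thesis using that by (simp add: admissible_weight_def b_def algebra_simps)
  qed
  ultimately show ?thesis by (auto simp: eventually_at_right_field)
qed

lemma has_real_derivative_osc_energy:
  assumes "(p has_real_derivative p') (at t within S)" "(z has_real_derivative z') (at t within S)"
  shows "((\<lambda>s. osc_energy m k e (p s) (z s)) has_real_derivative osc_energy_deriv m k e (p t) (z t) p' z')
           (at t within S)"
  unfolding osc_energy_def osc_energy_deriv_def
  by (rule derivative_eq_intros assms refl | simp)+ (simp add: algebra_simps)

lemma osc_energy_bounds: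
  assumes "0 < m" "0 < k" "admissible_weight m c k e"
  shows "k * p\<^sup>2 + m * z\<^sup>2 \<le> 4 * osc_energy m k e p z"
    and "4 * osc_energy m k e p z \<le> 3 * (k * p\<^sup>2 + m * z\<^sup>2)"
proof -
  have e: "0 < e" "e \<le> 1" "4 * m * e \<le> k" using assms(3) by (auto simp: admissible_weight_def)
  have "4 * e\<^sup>2 * m = e * (4 * m * e)" by (simp add: power2_eq_square)
  also have "\<dots> \<le> 4 * m * e" using e assms(1) by (simp add: mult_left_le_one_le)
  also have "\<dots> \<le> k" using e(3) .
  finally have gap: "0 \<le> m * (k - 4 * e\<^sup>2 * m) * p\<^sup>2" using assms(1) by simp
  have "m * (k * p\<^sup>2 + m * z\<^sup>2 + 4 * e * m * p * z) = (m * z + 2 * e * m * p)\<^sup>2 + m * (k - 4 * e\<^sup>2 * m) * p\<^sup>2"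
       "m * (k * p\<^sup>2 + m * z\<^sup>2 - 4 * e * m * p * z) = (m * z - 2 * e * m * p)\<^sup>2 + m * (k - 4 * e\<^sup>2 * m) * p\<^sup>2"
    by (simp_all add: power2_eq_square algebra_simps)
  with gap have "0 \<le> m * (k * p\<^sup>2 + m * z\<^sup>2 + 4 * e * m * p * z)"
    "0 \<le> m * (k * p\<^sup>2 + m * z\<^sup>2 - 4 * e * m * p * z)" by simp_all
  then have "0 \<le> k * p\<^sup>2 + m * z\<^sup>2 + 4 * e * m * p * z" "0 \<le> k * p\<^sup>2 + m * z\<^sup>2 - 4 * e * m * p * z"
    using assms(1) by (simp_all add: zero_le_mult_iff)
  then show "k * p\<^sup>2 + m * z\<^sup>2 \<le> 4 * osc_energy m k e p z"
    and "4 * osc_energy m k e p z \<le> 3 * (k * p\<^sup>2 + m * z\<^sup>2)"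
    by (simp_all add: osc_energy_def algebra_simps)
qed

lemma osc_energy_dissipation:
  assumes "0 < c" "0 < k" "admissible_weight m c k e"
    and "p' = z" "m * z' = - k * p - c * z"
  shows "osc_energy_deriv m k e p z p' z' \<le> - (e / 2) * (k * p\<^sup>2 + m * z\<^sup>2)"
proof -
  have e: "0 < e" "4 * m * e \<le> c" "2 * c * e \<le> k" using assms(3) by (auto simp: admissible_weight_def)
  have "e * m * k \<le> k * c / 4" using mult_right_mono[OF e(2), of k] assms(2) by (simp add: algebra_simps)
  moreover have "e * c\<^sup>2 \<le> k * c / 2"
    using mult_right_mono[OF e(3), of c] assms(1) by (simp add: algebra_simps power2_eq_square)
  moreover have "0 < k * c" using assms(1,2) by simp
  ultimately have coeff: "0 \<le> k * c - 3 / 2 * e * m * k - e * c\<^sup>2 / 2" by linarith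
  have deriv: "osc_energy_deriv m k e p z p' z' = (z + e * p) * (m * z') + k * p * z + e * m * z\<^sup>2"
    using assms(4) by (simp add: osc_energy_deriv_def power2_eq_square algebra_simps)
  text \<open>Multiplied by \<open>k\<close>, the gap is a sum of squares with nonnegative coefficients.\<close>
  have "k * (- (e / 2) * (k * p\<^sup>2 + m * z\<^sup>2) - osc_energy_deriv m k e p z p' z')
          = e / 2 * (k * p + c * z)\<^sup>2 + (k * c - 3 / 2 * e * m * k - e * c\<^sup>2 / 2) * z\<^sup>2"
    unfolding deriv assms(5) by (simp add: power2_eq_square algebra_simps)
  also have "\<dots> \<ge> 0" using e(1) coeff by simp
  finally show ?thesis using assms(2) by (simp add: zero_le_mult_iff)
qed

lemma osc_energy_decay_rate:
  assumes "0 < m" "0 < c" "0 < k" "admissible_weight m c k e"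
    and "p' = z" "m * z' = - k * p - c * z"
  shows "2 * e / 3 * osc_energy m k e p z + osc_energy_deriv m k e p z p' z' \<le> 0"
proof -
  have "0 < e" using assms(4) by (simp add: admissible_weight_def)
  then have "e / 6 * (4 * osc_energy m k e p z) \<le> e / 6 * (3 * (k * p\<^sup>2 + m * z\<^sup>2))"
    using osc_energy_bounds(2)[OF assms(1,3,4), of p z] by (intro mult_left_mono) auto
  then show ?thesis using osc_energy_dissipation[OF assms(2-6)] by linarith
qed

lemma osc_energy_add:
  "osc_energy m1 k1 e p z + osc_energy m2 k2 e p z = osc_energy (m1 + m2) (k1 + k2) e p z"
  by (simp add: osc_energy_def algebra_simps add_divide_distrib)

lemma weighted_mean_square_le:
  fixes m1 m2 p q :: real
  assumes "0 < m1" "0 < m2"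
  shows "(m1 + m2) * ((m1 * p + m2 * q) / (m1 + m2))\<^sup>2 \<le> m1 * p\<^sup>2 + m2 * q\<^sup>2"
proof -
  define w where "w = (m1 * p + m2 * q) / (m1 + m2)"
  have mean: "m1 * p + m2 * q = (m1 + m2) * w" using assms by (simp add: w_def)
  have "m1 * p\<^sup>2 + m2 * q\<^sup>2 - (m1 + m2) * w\<^sup>2
          = m1 * (p - w)\<^sup>2 + m2 * (q - w)\<^sup>2 + 2 * w * ((m1 * p + m2 * q) - (m1 + m2) * w)"
    by (simp add: power2_eq_square algebra_simps)
  also have "\<dots> = m1 * (p - w)\<^sup>2 + m2 * (q - w)\<^sup>2" by (simp add: mean)
  also have "\<dots> \<ge> 0" using assms by simp
  finally show ?thesis by (simp add: w_def)
qed

lemma osc_energy_momentum_average_le: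
  assumes "0 < m1" "0 < m2" "w = (m1 * p + m2 * q) / (m1 + m2)"
  shows "osc_energy m1 k1 e a w + osc_energy m2 k2 e a w \<le> osc_energy m1 k1 e a p + osc_energy m2 k2 e a q"
proof -
  have momentum: "m1 * p + m2 * q = (m1 + m2) * w" using assms by simp
  have kinetic: "(m1 + m2) * w\<^sup>2 \<le> m1 * p\<^sup>2 + m2 * q\<^sup>2"
    using weighted_mean_square_le[OF assms(1,2)] assms(3) by simp
  have "osc_energy m1 k1 e a w + osc_energy m2 k2 e a w
          = (k1 + k2) * a\<^sup>2 / 2 + (m1 + m2) * w\<^sup>2 / 2 + e * a * ((m1 + m2) * w)"
    by (simp add: osc_energy_def field_simps)
  also have "\<dots> \<le> (k1 + k2) * a\<^sup>2 / 2 + (m1 * p\<^sup>2 + m2 * q\<^sup>2) / 2 + e * a * (m1 * p + m2 * q)"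
    unfolding momentum using kinetic by simp
  also have "\<dots> = osc_energy m1 k1 e a p + osc_energy m2 k2 e a q"
    by (simp add: osc_energy_def field_simps)
  finally show ?thesis .
qed

section \<open>The coupled system\<close>

definition lyapunov :: "real \<Rightarrow> real \<Rightarrow> real \<Rightarrow> real \<Rightarrow> real \<Rightarrow> real^4 \<Rightarrow> real" where
  "lyapunov m1 m2 k1 k2 e y = osc_energy m1 k1 e (y$1) (y$2) + osc_energy m2 k2 e (y$3) (y$4)"

lemma mode1_equation_iff:
  "EE m1 m2 1 *v y' = AA c1 c2 k1 k2 1 *v y \<longleftrightarrow>
     y'$1 = y$2 \<and> m1 * y'$2 = - k1 * y$1 - c1 * y$2 \<and> y'$3 = y$4 \<and> m2 * y'$4 = - k2 * y$3 - c2 * y$4"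
  by (simp add: vec_eq_iff forall_4 EE_def AA_def matrix_vector_mult_def sum_4 vector_def)

lemma mode2_equation_iff:
  "EE m1 m2 2 *v y' = AA c1 c2 k1 k2 2 *v y \<longleftrightarrow>
     y'$1 = y$2 \<and> (m1 + m2) * y'$2 = - (k1 + k2) * y$1 - (c1 + c2) * y$2 \<and> y'$3 = y$4 \<and> y$3 = y$1"
  by (auto simp: vec_eq_iff forall_4 EE_def AA_def matrix_vector_mult_def sum_4 vector_def algebra_simps)

lemma lyapunov_norm_bounds:
  assumes "0 < m1" "0 < m2" "0 < k1" "0 < k2"
    and "admissible_weight m1 c1 k1 e" "admissible_weight m2 c2 k2 e"
  shows "min (min k1 m1) (min k2 m2) * (norm y)\<^sup>2 \<le> 4 * lyapunov m1 m2 k1 k2 e y"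
    and "4 * lyapunov m1 m2 k1 k2 e y \<le> 3 * max (max k1 m1) (max k2 m2) * (norm y)\<^sup>2"
proof -
  define Q where "Q = k1 * (y$1)\<^sup>2 + m1 * (y$2)\<^sup>2 + k2 * (y$3)\<^sup>2 + m2 * (y$4)\<^sup>2"
  define lo where "lo = min (min k1 m1) (min k2 m2)"
  define hi where "hi = max (max k1 m1) (max k2 m2)"
  have norm_sq: "(norm y)\<^sup>2 = (y$1)\<^sup>2 + (y$2)\<^sup>2 + (y$3)\<^sup>2 + (y$4)\<^sup>2"
    by (simp add: norm_vec_def L2_set_def sum_4)
  have "Q \<le> 4 * lyapunov m1 m2 k1 k2 e y" "4 * lyapunov m1 m2 k1 k2 e y \<le> 3 * Q"
    using osc_energy_bounds[OF assms(1,3,5), of "y$1" "y$2"] osc_energy_bounds[OF assms(2,4,6), of "y$3" "y$4"]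
    unfolding Q_def lyapunov_def by (simp_all add: algebra_simps)
  moreover have "lo * (norm y)\<^sup>2 \<le> Q"
    unfolding norm_sq Q_def lo_def distrib_left by (intro add_mono mult_right_mono) simp_all
  moreover have "Q \<le> hi * (norm y)\<^sup>2"
    unfolding norm_sq Q_def hi_def distrib_left by (intro add_mono mult_right_mono) simp_all
  ultimately show "lo * (norm y)\<^sup>2 \<le> 4 * lyapunov m1 m2 k1 k2 e y"
    and "4 * lyapunov m1 m2 k1 k2 e y \<le> 3 * hi * (norm y)\<^sup>2"
    by simp_all
qed

lemma lyapunov_switch_rule_le:
  assumes "0 < m1" "0 < m2" "switch_rule m1 m2 i j xm xp" "i \<noteq> j" "i \<in> {1, 2}" "j \<in> {1, 2}"
  shows "lyapunov m1 m2 k1 k2 e xp \<le> lyapunov m1 m2 k1 k2 e xm"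
proof (cases "i = 2")
  case True
  then show ?thesis using assms(3-6) by (auto simp: switch_rule_def)
next
  case False
  then have "i = 1" "j = 2" using assms(4-6) by auto
  then have "xm$3 = xm$1" "xp$1 = xm$1" "xp$3 = xm$1"
    "xp$2 = (m1 * xm$2 + m2 * xm$4) / (m1 + m2)" "xp$4 = (m1 * xm$2 + m2 * xm$4) / (m1 + m2)"
    using assms(3) by (auto simp: switch_rule_def)
  then show ?thesis
    unfolding lyapunov_def by (simp add: osc_energy_momentum_average_le[OF assms(1,2)])
qed

lemma tendsto_lyapunov:
  "(x \<longlongrightarrow> y) F \<Longrightarrow> ((\<lambda>s. lyapunov m1 m2 k1 k2 e (x s)) \<longlongrightarrow> lyapunov m1 m2 k1 k2 e y) F"
  unfolding lyapunov_def osc_energy_def by (intro tendsto_intros) simp_all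

section \<open>Solutions of the switched system\<close>

lemma isCont_discrete_iff:
  "isCont (f :: 'a::t2_space \<Rightarrow> 'b::discrete_topology) t \<longleftrightarrow> eventually (\<lambda>s. f s = f t) (at t)"
  by (simp add: continuous_at tendsto_discrete)

lemma has_real_derivative_vec_nth:
  "(x has_vector_derivative x') F \<Longrightarrow> ((\<lambda>s. x s $ i) has_real_derivative x' $ i) F"
  using bounded_linear.has_vector_derivative[OF bounded_linear_vec_nth[of i]]
  by (simp add: has_real_derivative_iff_has_vector_derivative)

lemma DERIV_unique_within_Ici:
  fixes f :: "real \<Rightarrow> real"
  assumes "t0 \<le> s" "(f has_real_derivative a) (at s within {t0..})"
    and "(f has_real_derivative b) (at s within {t0..})"
  shows "a = b"
proof -
  have "at_right s \<le> at s within {t0..}" by (rule at_le) (use assms(1) in auto)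
  then have "at s within {t0..} \<noteq> bot" by (auto simp: bot_unique)
  then show ?thesis using vector_derivative_unique_within assms(2,3)
    by (simp add: has_real_derivative_iff_has_vector_derivative)
qed

lemma
  assumes "is_solution m1 m2 c1 c2 k1 k2 t0 \<sigma> x"
  shows solution_mode_range: "t0 \<le> t \<Longrightarrow> \<sigma> t \<in> {1, 2}"
    and solution_mode_right_constant: "t0 \<le> t \<Longrightarrow> eventually (\<lambda>s. \<sigma> s = \<sigma> t) (at_right t)"
    and solution_finite_switches: "finite {t. t0 < t \<and> t \<le> T \<and> \<not> isCont \<sigma> t}"
    and solution_ode: "t0 \<le> t \<Longrightarrow> t = t0 \<or> isCont \<sigma> t \<Longrightarrow>
          \<exists>x'. (x has_vector_derivative x') (at t within {t0..}) \<and>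
                EE m1 m2 (\<sigma> t) *v x' = AA c1 c2 k1 k2 (\<sigma> t) *v x t"
    and solution_jump: "t0 < t \<Longrightarrow> \<not> isCont \<sigma> t \<Longrightarrow>
          \<exists>xm. (x \<longlongrightarrow> xm) (at_left t) \<and> (x \<longlongrightarrow> x t) (at_right t) \<and>
                (\<forall>i. eventually (\<lambda>s. \<sigma> s = i) (at_left t) \<longrightarrow> switch_rule m1 m2 i (\<sigma> t) xm (x t))"
  using assms unfolding is_solution_def by (simp_all, blast)

lemma solution_mode_locally_constant:
  assumes sol: "is_solution m1 m2 c1 c2 k1 k2 t0 \<sigma> x" and t: "t0 \<le> t" "t = t0 \<or> isCont \<sigma> t"
  obtains d where "0 < d" "\<And>s. t0 \<le> s \<Longrightarrow> dist s t < d \<Longrightarrow> \<sigma> s = \<sigma> t \<and> (s = t0 \<or> isCont \<sigma> s)"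
proof -
  obtain d where d: "0 < d" and const: "\<And>s. t0 \<le> s \<Longrightarrow> dist s t < d \<Longrightarrow> \<sigma> s = \<sigma> t"
  proof (cases "t = t0")
    case True
    have "eventually (\<lambda>s. \<sigma> s = \<sigma> t) (at_right t)" by (rule solution_mode_right_constant[OF sol t(1)])
    then obtain b where b: "t < b" "\<And>s. t < s \<Longrightarrow> s < b \<Longrightarrow> \<sigma> s = \<sigma> t"
      by (auto simp: eventually_at_right_field)
    show ?thesis
    proof (rule that[of "b - t"])
      fix s assume s: "t0 \<le> s" "dist s t < b - t"
      show "\<sigma> s = \<sigma> t"
      proof (cases "s = t")
        case False
        then have "t < s" "s < b" using s True by (auto simp: dist_real_def)
        then show ?thesis by (rule b(2))
      qed simp
    qed (use b in simp)
  next
    case False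
    with t have "eventually (\<lambda>s. \<sigma> s = \<sigma> t) (at t)" by (simp add: isCont_discrete_iff)
    then obtain d where d: "0 < d" "\<And>s. s \<noteq> t \<Longrightarrow> dist s t < d \<Longrightarrow> \<sigma> s = \<sigma> t"
      by (auto simp: eventually_at)
    show ?thesis
    proof (rule that[OF d(1)])
      show "\<sigma> s = \<sigma> t" if "dist s t < d" for s using d(2)[of s] that by (cases "s = t") auto
    qed
  qed
  have cont: "isCont \<sigma> s" if s: "t0 < s" "dist s t < d" for s
  proof -
    define d' where "d' = min (d - dist s t) (s - t0)"
    have "0 < d'" using s by (simp add: d'_def)
    moreover have "\<forall>y. y \<noteq> s \<and> dist y s < d' \<longrightarrow> \<sigma> y = \<sigma> s"
    proof (intro allI impI)
      fix y assume "y \<noteq> s \<and> dist y s < d'"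
      then have y: "dist y s < d'" by simp
      have "dist y t < d" using y dist_triangle[of y t s] by (simp add: d'_def)
      moreover have "t0 \<le> y" using y by (auto simp: d'_def dist_real_def)
      ultimately show "\<sigma> y = \<sigma> s" using const[of y] const[of s] s by simp
    qed
    ultimately have "eventually (\<lambda>y. \<sigma> y = \<sigma> s) (at s)"
      unfolding eventually_at by blast
    then show ?thesis by (simp add: isCont_discrete_iff)
  qed
  show ?thesis
  proof (rule that[OF d])
    fix s assume s: "t0 \<le> s" "dist s t < d"
    have "s = t0 \<or> isCont \<sigma> s"
    proof (cases "s = t0")
      case False
      with s have "t0 < s" by simp
      then show ?thesis using cont s(2) by simp
    qed simp
    then show "\<sigma> s = \<sigma> t \<and> (s = t0 \<or> isCont \<sigma> s)" using const[OF s] by simp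
  qed
qed

text \<open>In mode 2 the last row of the descriptor equation is the algebraic constraint \<open>x\<^sub>3 = x\<^sub>1\<close>;
  holding on a relative neighbourhood it can be differentiated, giving \<open>x\<^sub>4 = x\<^sub>2\<close>.\<close>

lemma solution_locked_near:
  assumes sol: "is_solution m1 m2 c1 c2 k1 k2 t0 \<sigma> x" and t: "t0 \<le> t" "t = t0 \<or> isCont \<sigma> t"
    and mode: "\<sigma> t = 2"
  obtains d where "0 < d" "\<And>s. t0 \<le> s \<Longrightarrow> dist s t < d \<Longrightarrow> x s$3 = x s$1 \<and> x s$4 = x s$2"
proof -
  obtain d where d: "0 < d" "\<And>s. t0 \<le> s \<Longrightarrow> dist s t < d \<Longrightarrow> \<sigma> s = 2 \<and> (s = t0 \<or> isCont \<sigma> s)"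
    using solution_mode_locally_constant[OF sol t] mode by auto
  have ode: "\<exists>x'. (x has_vector_derivative x') (at s within {t0..}) \<and>
              EE m1 m2 2 *v x' = AA c1 c2 k1 k2 2 *v x s" if "t0 \<le> s" "dist s t < d" for s
    using solution_ode[OF sol that(1)] d(2)[OF that] by auto
  have constraint: "x s$3 = x s$1" if "t0 \<le> s" "dist s t < d" for s
    using ode[OF that] by (auto simp: mode2_equation_iff)
  have "x s$4 = x s$2" if s: "t0 \<le> s" "dist s t < d" for s
  proof -
    obtain x' where x': "(x has_vector_derivative x') (at s within {t0..})"
      "EE m1 m2 2 *v x' = AA c1 c2 k1 k2 2 *v x s" using ode[OF s] by blast
    have "((\<lambda>u. x u$3 - x u$1) has_real_derivative x'$3 - x'$1) (at s within {t0..})"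
      by (intro derivative_intros has_real_derivative_vec_nth x'(1))
    moreover have "((\<lambda>u. x u$3 - x u$1) has_real_derivative 0) (at s within {t0..})"
    proof (rule has_field_derivative_transform_within[of "\<lambda>u. 0" 0 s "{t0..}" "d - dist s t"])
      fix u assume u: "u \<in> {t0..}" "dist u s < d - dist s t"
      then have "dist u t < d" using dist_triangle[of u t s] by simp
      then show "0 = x u$3 - x u$1" using constraint[of u] u by simp
    qed (use s in auto)
    ultimately have "x'$3 = x'$1" using DERIV_unique_within_Ici s(1) by fastforce
    then show ?thesis using x'(2) by (simp add: mode2_equation_iff)
  qed
  then show ?thesis using that[OF d(1)] constraint by blast
qed

lemma solution_left_mode:
  assumes sol: "is_solution m1 m2 c1 c2 k1 k2 t0 \<sigma> x" and "t0 < t"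
  obtains i where "eventually (\<lambda>s. \<sigma> s = i) (at_left t)"
proof -
  define D where "D = {u. t0 < u \<and> u < t \<and> \<not> isCont \<sigma> u}"
  have fin_D: "finite D" by (rule finite_subset[OF _ solution_finite_switches[OF sol, of t]]) (auto simp: D_def)
  define a where "a = Max (insert t0 D)"
  have "a \<in> insert t0 D" using fin_D unfolding a_def by (intro Max_in) auto
  then have "a < t" using \<open>t0 < t\<close> by (auto simp: D_def)
  have a_max: "t0 \<le> a" "\<And>u. u \<in> D \<Longrightarrow> u \<le> a" using fin_D unfolding a_def by simp_all
  have cont: "isCont \<sigma> u" if "a < u" "u < t" for u
  proof (rule ccontr)
    assume "\<not> isCont \<sigma> u"
    then have "u \<in> D" using that a_max(1) by (auto simp: D_def)
    then show False using a_max(2) that(1) by fastforce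
  qed
  have "(\<lambda>u. real (\<sigma> u)) constant_on {a<..<t}"
  proof (rule continuous_discrete_range_constant)
    show "continuous_on {a<..<t} (\<lambda>u. real (\<sigma> u))"
      using cont by (intro continuous_at_imp_continuous_on ballI continuous_intros) auto
    show "\<exists>e>0. \<forall>y. y \<in> {a<..<t} \<and> real (\<sigma> y) \<noteq> real (\<sigma> u) \<longrightarrow> e \<le> norm (real (\<sigma> y) - real (\<sigma> u))"
      for u
    proof (intro exI[of _ 1] conjI allI impI)
      show "1 \<le> norm (real (\<sigma> y) - real (\<sigma> u))" if "y \<in> {a<..<t} \<and> real (\<sigma> y) \<noteq> real (\<sigma> u)" for y
        using that by (cases "\<sigma> y < \<sigma> u") auto
    qed simp
  qed simp
  then obtain y where y: "\<And>u. u \<in> {a<..<t} \<Longrightarrow> real (\<sigma> u) = y" by (auto simp: constant_on_def)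
  define p where "p = (a + t) / 2"
  have "\<sigma> u = \<sigma> p" if "u \<in> {a<..<t}" for u
    using y[OF that] y[of p] \<open>a < t\<close> by (simp add: p_def)
  then show ?thesis using eventually_at_left_real[OF \<open>a < t\<close>]
    by (intro that[of "\<sigma> p"]) (auto elim: eventually_mono)
qed

lemma solution_switch:
  assumes sol: "is_solution m1 m2 c1 c2 k1 k2 t0 \<sigma> x" and t: "t0 < t" "\<not> isCont \<sigma> t"
  obtains i xm where "(x \<longlongrightarrow> xm) (at_left t)" "(x \<longlongrightarrow> x t) (at_right t)"
    "i \<noteq> \<sigma> t" "i \<in> {1, 2}" "\<sigma> t \<in> {1, 2}" "switch_rule m1 m2 i (\<sigma> t) xm (x t)"
proof -
  obtain xm where xm: "(x \<longlongrightarrow> xm) (at_left t)" "(x \<longlongrightarrow> x t) (at_right t)"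
    "\<And>i. eventually (\<lambda>s. \<sigma> s = i) (at_left t) \<Longrightarrow> switch_rule m1 m2 i (\<sigma> t) xm (x t)"
    using solution_jump[OF sol t] by blast
  obtain i where i: "eventually (\<lambda>s. \<sigma> s = i) (at_left t)" using solution_left_mode[OF sol t(1)] .
  have "eventually (\<lambda>s. \<sigma> s = i \<and> t0 < s) (at_left t)"
    using i eventually_at_left_real[OF t(1)] by eventually_elim auto
  then obtain s where "\<sigma> s = i" "t0 < s" using eventually_happens'[OF trivial_limit_at_left_real] by blast
  then have "i \<in> {1, 2}" using solution_mode_range[OF sol, of s] by simp
  moreover have "\<sigma> t \<in> {1, 2}" using solution_mode_range[OF sol] t(1) by simp
  moreover have "i \<noteq> \<sigma> t"
  proof
    assume "i = \<sigma> t"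
    moreover have "eventually (\<lambda>s. \<sigma> s = \<sigma> t) (at_right t)"
      using solution_mode_right_constant[OF sol] t(1) by simp
    ultimately have "eventually (\<lambda>s. \<sigma> s = \<sigma> t) (at t)" using i by (simp add: eventually_at_split)
    then show False using t(2) by (simp add: isCont_discrete_iff)
  qed
  ultimately show ?thesis using that xm i by blast
qed

lemma solution_lyapunov_derivative:
  assumes pos: "0 < m1" "0 < m2" "0 < c1" "0 < c2" "0 < k1" "0 < k2"
    and adm: "admissible_weight m1 c1 k1 e" "admissible_weight m2 c2 k2 e"
      "admissible_weight (m1 + m2) (c1 + c2) (k1 + k2) e"
    and sol: "is_solution m1 m2 c1 c2 k1 k2 t0 \<sigma> x" and t: "t0 \<le> t" "t = t0 \<or> isCont \<sigma> t"
  obtains L where "((\<lambda>s. lyapunov m1 m2 k1 k2 e (x s)) has_real_derivative L) (at t within {t0..})"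
    "2 * e / 3 * lyapunov m1 m2 k1 k2 e (x t) + L \<le> 0"
proof -
  obtain x' where x': "(x has_vector_derivative x') (at t within {t0..})"
    "EE m1 m2 (\<sigma> t) *v x' = AA c1 c2 k1 k2 (\<sigma> t) *v x t"
    using solution_ode[OF sol t] by blast
  have D: "((\<lambda>s. x s$i) has_real_derivative x'$i) (at t within {t0..})" for i
    by (rule has_real_derivative_vec_nth[OF x'(1)])
  consider "\<sigma> t = 1" | "\<sigma> t = 2" using solution_mode_range[OF sol t(1)] by blast
  then show ?thesis
  proof cases
    case 1
    have ode: "x'$1 = x t$2" "m1 * x'$2 = - k1 * x t$1 - c1 * x t$2"
      "x'$3 = x t$4" "m2 * x'$4 = - k2 * x t$3 - c2 * x t$4"
      using x'(2) unfolding 1 mode1_equation_iff by simp_all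
    show ?thesis
    proof (rule that)
      show "((\<lambda>s. lyapunov m1 m2 k1 k2 e (x s)) has_real_derivative
              osc_energy_deriv m1 k1 e (x t$1) (x t$2) (x'$1) (x'$2)
              + osc_energy_deriv m2 k2 e (x t$3) (x t$4) (x'$3) (x'$4)) (at t within {t0..})"
        unfolding lyapunov_def by (intro DERIV_add has_real_derivative_osc_energy D)
      show "2 * e / 3 * lyapunov m1 m2 k1 k2 e (x t)
              + (osc_energy_deriv m1 k1 e (x t$1) (x t$2) (x'$1) (x'$2)
                 + osc_energy_deriv m2 k2 e (x t$3) (x t$4) (x'$3) (x'$4)) \<le> 0"
        using osc_energy_decay_rate[OF pos(1,3,5) adm(1) ode(1,2)]
          osc_energy_decay_rate[OF pos(2,4,6) adm(2) ode(3,4)]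
        unfolding lyapunov_def distrib_left by linarith
    qed
  next
    case 2
    have ode: "x'$1 = x t$2" "(m1 + m2) * x'$2 = - (k1 + k2) * x t$1 - (c1 + c2) * x t$2"
      using x'(2) unfolding 2 mode2_equation_iff by simp_all
    obtain d where d: "0 < d" "\<And>s. t0 \<le> s \<Longrightarrow> dist s t < d \<Longrightarrow> x s$3 = x s$1 \<and> x s$4 = x s$2"
      using solution_locked_near[OF sol t 2] by blast
    have locked: "lyapunov m1 m2 k1 k2 e (x s) = osc_energy (m1 + m2) (k1 + k2) e (x s$1) (x s$2)"
      if "t0 \<le> s" "dist s t < d" for s
      using d(2)[OF that] by (simp add: lyapunov_def osc_energy_add)
    show ?thesis
    proof (rule that)
      have "((\<lambda>s. osc_energy (m1 + m2) (k1 + k2) e (x s$1) (x s$2)) has_real_derivative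
              osc_energy_deriv (m1 + m2) (k1 + k2) e (x t$1) (x t$2) (x'$1) (x'$2)) (at t within {t0..})"
        by (intro has_real_derivative_osc_energy D)
      then show "((\<lambda>s. lyapunov m1 m2 k1 k2 e (x s)) has_real_derivative
              osc_energy_deriv (m1 + m2) (k1 + k2) e (x t$1) (x t$2) (x'$1) (x'$2)) (at t within {t0..})"
        by (rule has_field_derivative_transform_within[OF _ d(1)]) (use t locked in auto)
      have "0 < m1 + m2" "0 < c1 + c2" "0 < k1 + k2" using pos by simp_all
      then show "2 * e / 3 * lyapunov m1 m2 k1 k2 e (x t)
              + osc_energy_deriv (m1 + m2) (k1 + k2) e (x t$1) (x t$2) (x'$1) (x'$2) \<le> 0"
        using osc_energy_decay_rate[OF _ _ _ adm(3) ode] locked[of t] t d(1) by simp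
    qed
  qed
qed

lemma solution_lyapunov_decay:
  assumes pos: "0 < m1" "0 < m2" "0 < c1" "0 < c2" "0 < k1" "0 < k2"
    and adm: "admissible_weight m1 c1 k1 e" "admissible_weight m2 c2 k2 e"
      "admissible_weight (m1 + m2) (c1 + c2) (k1 + k2) e"
    and sol: "is_solution m1 m2 c1 c2 k1 k2 t0 \<sigma> x" and "t0 \<le> t"
  shows "lyapunov m1 m2 k1 k2 e (x t) \<le> exp (- (2 * e / 3) * (t - t0)) * lyapunov m1 m2 k1 k2 e (x t0)"
proof -
  define g where "g s = exp (2 * e / 3 * (s - t0)) * lyapunov m1 m2 k1 k2 e (x s)" for s
  have "g t \<le> g t0"
  proof (rule nonincreasing_with_downward_jumps[where P = "\<lambda>u. \<not> isCont \<sigma> u",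
        OF solution_finite_switches[OF sol] _ _ \<open>t0 \<le> t\<close>])
    fix s assume "t0 \<le> s" "s = t0 \<or> \<not> \<not> isCont \<sigma> s"
    then obtain L where "((\<lambda>s. lyapunov m1 m2 k1 k2 e (x s)) has_real_derivative L) (at s within {t0..})"
      "2 * e / 3 * lyapunov m1 m2 k1 k2 e (x s) + L \<le> 0"
      using solution_lyapunov_derivative[OF pos adm sol] by auto
    then show "\<exists>d. (g has_real_derivative d) (at s within {t0..}) \<and> d \<le> 0"
      unfolding g_def by (rule exp_weighted_DERIV_nonpos)
  next
    fix s assume s: "t0 < s" "\<not> isCont \<sigma> s"
    then obtain i xm where xm: "(x \<longlongrightarrow> xm) (at_left s)" "(x \<longlongrightarrow> x s) (at_right s)"
      and switch: "i \<noteq> \<sigma> s" "i \<in> {1, 2}" "\<sigma> s \<in> {1, 2}" "switch_rule m1 m2 i (\<sigma> s) xm (x s)"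
      by (rule solution_switch[OF sol])
    have "(g \<longlongrightarrow> g s) (at_right s)"
      unfolding g_def by (intro tendsto_intros tendsto_lyapunov xm(2))
    moreover have "(g \<longlongrightarrow> exp (2 * e / 3 * (s - t0)) * lyapunov m1 m2 k1 k2 e xm) (at_left s)"
      unfolding g_def by (intro tendsto_intros tendsto_lyapunov xm(1))
    moreover have "g s \<le> exp (2 * e / 3 * (s - t0)) * lyapunov m1 m2 k1 k2 e xm"
      using lyapunov_switch_rule_le[OF pos(1,2) switch(4,1,2,3)] by (simp add: g_def)
    ultimately show "(g \<longlongrightarrow> g s) (at_right s) \<and> (\<exists>L. (g \<longlongrightarrow> L) (at_left s) \<and> g s \<le> L)"
      by blast
  qed
  then have "exp (- (2 * e / 3) * (t - t0)) * g t \<le> exp (- (2 * e / 3) * (t - t0)) * g t0"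
    by (rule mult_left_mono) simp
  then show ?thesis by (simp add: g_def exp_minus field_simps)
qed

lemma le_sqrt_mult_exp_of_square_le:
  fixes a b C lo \<alpha> s :: real
  assumes "0 < lo" "0 \<le> C" "0 \<le> b" "lo * a\<^sup>2 \<le> exp (- (2 * \<alpha>) * s) * (C * b\<^sup>2)"
  shows "a \<le> sqrt (C / lo) * exp (- \<alpha> * s) * b"
proof (rule power2_le_imp_le)
  have "(exp (- \<alpha> * s))\<^sup>2 = exp (- (2 * \<alpha>) * s)" by (simp add: exp_double[symmetric])
  then have "(sqrt (C / lo) * exp (- \<alpha> * s) * b)\<^sup>2 = exp (- (2 * \<alpha>) * s) * (C * b\<^sup>2) / lo"
    using assms(1,2) by (simp add: power_mult_distrib)
  then show "a\<^sup>2 \<le> (sqrt (C / lo) * exp (- \<alpha> * s) * b)\<^sup>2"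
    using assms(1,4) by (simp add: pos_le_divide_eq mult.commute)
qed (use assms in simp)

theorem mainTheorem11:
  fixes m1 m2 c1 c2 k1 k2 :: real
  assumes "m1 > 0" "m2 > 0" "c1 > 0" "c2 > 0" "k1 > 0" "k2 > 0"
  shows "GUES m1 m2 c1 c2 k1 k2"
proof -
  have "eventually (\<lambda>e. admissible_weight m1 c1 k1 e \<and> admissible_weight m2 c2 k2 e \<and>
          admissible_weight (m1 + m2) (c1 + c2) (k1 + k2) e) (at_right 0)"
    using assms by (intro eventually_conj eventually_admissible_weight) auto
  then obtain e where adm: "admissible_weight m1 c1 k1 e" "admissible_weight m2 c2 k2 e"
    "admissible_weight (m1 + m2) (c1 + c2) (k1 + k2) e"
    using eventually_happens'[OF trivial_limit_at_right_real] by blast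
  define lo where "lo = min (min k1 m1) (min k2 m2)"
  define hi where "hi = max (max k1 m1) (max k2 m2)"
  have "0 < lo" "0 < hi" "0 < e" using assms adm(1) by (simp_all add: lo_def hi_def admissible_weight_def)
  have "norm (x t) \<le> sqrt (3 * hi / lo) * exp (- (e / 3) * (t - t0)) * norm (x t0)"
    if sol: "is_solution m1 m2 c1 c2 k1 k2 t0 \<sigma> x" and "t0 \<le> t" for t0 \<sigma> x t
  proof (rule le_sqrt_mult_exp_of_square_le)
    have "lo * (norm (x t))\<^sup>2 \<le> 4 * lyapunov m1 m2 k1 k2 e (x t)"
      unfolding lo_def by (rule lyapunov_norm_bounds(1)[OF assms(1,2,5,6) adm(1,2)])
    also have "\<dots> \<le> exp (- (2 * (e / 3)) * (t - t0)) * (4 * lyapunov m1 m2 k1 k2 e (x t0))"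
      using solution_lyapunov_decay[OF assms adm sol \<open>t0 \<le> t\<close>] by simp
    also have "\<dots> \<le> exp (- (2 * (e / 3)) * (t - t0)) * (3 * hi * (norm (x t0))\<^sup>2)"
      unfolding hi_def by (intro mult_left_mono lyapunov_norm_bounds(2)[OF assms(1,2,5,6) adm(1,2)]) simp
    finally show "lo * (norm (x t))\<^sup>2 \<le> exp (- (2 * (e / 3)) * (t - t0)) * (3 * hi * (norm (x t0))\<^sup>2)" .
  qed (use \<open>0 < lo\<close> \<open>0 < hi\<close> in auto)
  then show ?thesis
    unfolding GUES_def using \<open>0 < lo\<close> \<open>0 < hi\<close> \<open>0 < e\<close>
    by (intro exI[of _ "sqrt (3 * hi / lo)"] exI[of _ "e / 3"] conjI) auto
qed

end
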